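(* Let $f_1 \in \mathcal{F}_{\mu_1,L_1}(\mathbb{R}^d)$ and $f_2 \in \mathcal{F}_{\mu_2,L_2}(\mathbb{R}^d)$ with $\mu_1 \in [0,\infty)$, $L_1 \in (\mu_1,\infty]$, $\mu_2 \in \mathbb{R}$, $L_2 \in (\mu_2,\infty]$, such that $F = f_1 - f_2$ is bounded below, $\emptyset \ne \operatorname{dom}\partial f_1 \subseteq \operatorname{dom}\partial f_2$ and $\operatorname{range}\partial f_2 \subseteq \operatorname{range}\partial f_1$. Assume at least one of $f_1, f_2$ is smooth (i.e. $L_1<\infty$ or $L_2<\infty$), and assume $\mu_1 + \mu_2 > 0$ or $\mu_1 = \mu_2 = 0$. Let $x \in \operatorname{dom}\partial f_1$, let $g_2 \in \partial f_2(x)$ be the subgradient selected in one DCA iteration and $x^+ \in \operatorname{argmin}_w\{f_1(w) - \langle g_2, w\rangle\}$ the resulting point, so that $g_1^+ := g_2 \in \partial f_1(x^+)$. Let $g_1 \in \partial f_1(x)$ and $g_2^+ \in \partial f_2(x^+)$ be arbitrary. Set $B := \mu_1^{-1} + \mu_2^{-1} + L_2^{-1}$ and $E := \frac{L_2+\mu_2}{L_1 L_2}\cdot\frac{L_2 - L_1}{-\mu_2} + \mu_1^{-1} - L_1^{-1}$. Then for each $i \in \{1,\dots,6\}$ such that the parameters lie in the domain $D_i$ below, $$F(x) - F(x^+) \ge \sigma_i \tfrac12 \|g_1 - g_2\|^2 + \sigma_i^+ \tfrac12 \|g_1^+ - g_2^+\|^2,$$ with $\sigma_i, \sigma_i^+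 \ge 0$ given by: (1) $\sigma_1 = L_2^{-1}\frac{L_2-\mu_1}{L_1-\mu_1}$, $\sigma_1^+ = L_2^{-1}\Big(1 + \frac{L_2^{-1} - L_1^{-1}}{\mu_1^{-1} - L_1^{-1}}\Big)$; $D_1$: $L_1 \ge L_2 \ge \mu_1 \ge 0$, $L_1 > \mu_2$, and either $\mu_2 \ge 0$, or $\mu_2 < 0$ and $E \le 0$. (2) $\sigma_2 = L_1^{-1}\Big(1 + \frac{L_1^{-1} - L_2^{-1}}{\mu_2^{-1} - L_2^{-1}}\Big)$, $\sigma_2^+ = L_1^{-1}\frac{L_1-\mu_2}{L_2-\mu_2}$; $D_2$: $L_2 \ge L_1 \ge \mu_2 \ge 0$, $L_2 > \mu_1$, $\mu_1 \ge 0$. (3) $\sigma_3 = \frac{L_1^{-1} B}{B - L_1^{-1}}$, $\sigma_3^+ = \frac{1}{L_2+\mu_2}$; $D_3$: $\mu_2<0$, $\mu_1>0$, $L_2>\mu_1$, $L_1>\mu_2$, $B \le 0$, and either ($L_1 \ge L_2$ and $E \ge 0$) or $L_2 > L_1$. (4) $\sigma_4 = 0$, $\sigma_4^+ = \frac{\mu_1+\mu_2}{\mu_2^2}$; $D_4$: $\mu_2<0$, $\mu_1>0$, $L_1>\mu_2$, and either ($B>0$ and $L_2 > \mu_1$), or ($B>0$ and $0<L_2 \le \mu_1$), or ($B \le 0$ and $L_2 \le 0$). (5) $\sigma_5 = 0$, $\sigma_5^+ = \frac{L_2+\mu_1}{L_2^2}$; $D_5$: $L_1 > \mu_1 \ge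 L_2 > 0$, $L_1 > \mu_2$, and either $\mu_2 \ge 0$, or $\mu_2<0$ and $B \le 0$. (6) $\sigma_6 = \frac{L_1+\mu_2}{L_1^2}$, $\sigma_6^+ = 0$; $D_6$: $L_2 > \mu_2 \ge L_1 > \mu_1 \ge 0$.
   Context: For $\mu \in \mathbb{R}$ and $L \in (\mu,\infty]$, $\mathcal{F}_{\mu,L}(\mathbb{R}^d)$ is the class of proper lower semicontinuous $f:\mathbb{R}^d\to\mathbb{R}$ with $f - \frac{\mu}{2}\|\cdot\|^2$ convex and, if $L<\infty$, $\frac{L}{2}\|\cdot\|^2 - f$ convex (no upper condition when $L = \infty$); $L$ may be nonpositive. For such $f$, $\partial f(x) = \{g + \mu x : g \in \partial(f - \frac{\mu}{2}\|\cdot\|^2)(x)\}$ with the convex subdifferential; $\partial f(x) = \{\nabla f(x)\}$ where $f$ is differentiable. $\operatorname{dom}\partial f = \{x : \partial f(x)\neq\emptyset\}$, $\operatorname{range}\partial f = \bigcup_x \partial f(x)$. A function is smooth if it is differentiable with Lipschitz gradient (here: its upper curvature $L$ is finite). Conventions: $1/\infty = 0$, and expressions involving an infinite parameter are understood as their limits. *)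

theory Defs
  imports "HOL-Analysis.Analysis"
begin

definition lsc_fun :: "('a::topological_space \<Rightarrow> real) \<Rightarrow> bool" where
  "lsc_fun f \<longleftrightarrow> (\<forall>c. closed {x. f x \<le> c})"

definition FmuL :: "real \<Rightarrow> ereal \<Rightarrow> ('a::euclidean_space \<Rightarrow> real) \<Rightarrow> bool" where
  "FmuL \<mu> L f \<longleftrightarrow> ereal \<mu> < L \<and> lsc_fun f \<and>
     convex_on UNIV (\<lambda>x. f x - \<mu> / 2 * norm x ^ 2) \<and>
     (L \<noteq> \<infinity> \<longrightarrow> convex_on UNIV (\<lambda>x. real_of_ereal L / 2 * norm x ^ 2 - f x))"

definition cvx_subdiff :: "('a::real_inner \<Rightarrow> real) \<Rightarrow> 'a \<Rightarrow> 'a set" where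
  "cvx_subdiff h x = {g. \<forall>y. h y \<ge> h x + inner g (y - x)}"

definition subdiff :: "real \<Rightarrow> ('a::real_inner \<Rightarrow> real) \<Rightarrow> 'a \<Rightarrow> 'a set" where
  "subdiff \<mu> f x = {g + \<mu> *\<^sub>R x | g. g \<in> cvx_subdiff (\<lambda>y. f y - \<mu> / 2 * norm y ^ 2) x}"

definition dom_subdiff :: "real \<Rightarrow> ('a::real_inner \<Rightarrow> real) \<Rightarrow> 'a set" where
  "dom_subdiff \<mu> f = {x. subdiff \<mu> f x \<noteq> {}}"

definition range_subdiff :: "real \<Rightarrow> ('a::real_inner \<Rightarrow> real) \<Rightarrow> 'a set" where
  "range_subdiff \<mu> f = (\<Union>x. subdiff \<mu> f x)"

definition inv_ext :: "ereal \<Rightarrow> real" where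
  "inv_ext L = (if L = \<infinity> then 0 else 1 / real_of_ereal L)"

definition Bpar :: "real \<Rightarrow> real \<Rightarrow> ereal \<Rightarrow> real" where
  "Bpar \<mu>1 \<mu>2 L2 = 1 / \<mu>1 + 1 / \<mu>2 + inv_ext L2"

text \<open>E = (L2+mu2)/(L1 L2) * (L2-L1)/(-mu2) + 1/mu1 - 1/L1,
  rewritten using (L2-L1)/(L1 L2) = 1/L1 - 1/L2 (so that L1 = \<infinity> is the limit);
  only used where L2 is finite.\<close>
definition Epar :: "real \<Rightarrow> real \<Rightarrow> ereal \<Rightarrow> ereal \<Rightarrow> real" where
  "Epar \<mu>1 \<mu>2 L1 L2 = (real_of_ereal L2 + \<mu>2) / (- \<mu>2) * (inv_ext L1 - inv_ext L2)
      + 1 / \<mu>1 - inv_ext L1"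

end

theory Submission
  imports Defs
begin

text \<open>
  For f in F(mu, L), points x, y and subgradients g of f at x and h of f at y, the interpolation
  inequality
    f y >= f x + <g, y - x> + mu/2 |x - y|^2 + 1/(2 (L - mu)) |g - h - mu (x - y)|^2
  holds. In a DCA step the subgradient g2 of f2 at x is also one of f1 at x+ (optimality of x+),
  so f1 and f2 both come with subgradients at x and at x+. Weighting the two interpolation
  inequalities of f1 by (beta - 1)/2 and (beta + 1)/2 and completing a square gives
    f1 x - f1 x+ - <g2, x - x+> >= sigma/2 |g1 - g2|^2 + v1/2 |x - x+|^2,
  and in the same way
    f2 x+ - f2 x + <g2, x - x+> >= sigma+/2 |g2 - g2+|^2 + v2/2 |x - x+|^2.
  The linear terms cancel in the sum, which is the claim as soon as v1 + v2 >= 0. On each domain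
  D_i the weights can be written down explicitly, and what remains is algebra in the parameters.
\<close>

section \<open>Subgradients of weakly convex functions\<close>

lemma norm_diff_square_eq:
  fixes x y :: "'a::real_inner"
  shows "(norm (y - x))\<^sup>2 = (norm y)\<^sup>2 - (norm x)\<^sup>2 - 2 * inner x (y - x)"
  unfolding power2_norm_eq_inner by (simp add: inner_diff_left inner_diff_right inner_commute)

lemma norm_add_scaleR_square:
  fixes p d :: "'a::real_inner"
  shows "(norm (p + a *\<^sub>R d))\<^sup>2 = (norm p)\<^sup>2 + 2 * a * inner p d + a\<^sup>2 * (norm d)\<^sup>2"
  unfolding power2_norm_eq_inner
  by (simp add: inner_add_left inner_add_right inner_commute[of d p] power2_eq_square algebra_simps)

lemma norm_diff_scaleR_square:
  fixes p d :: "'a::real_inner"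
  shows "(norm (p - a *\<^sub>R d))\<^sup>2 = (norm p)\<^sup>2 - 2 * a * inner p d + a\<^sup>2 * (norm d)\<^sup>2"
  using norm_add_scaleR_square[of p "- a" d] by simp

lemma nonneg_of_forall_small_ge:
  fixes D K :: real
  assumes "\<And>s. 0 < s \<Longrightarrow> s \<le> 1 \<Longrightarrow> - (s * K) \<le> D"
  shows "0 \<le> D"
proof (rule tendsto_upperbound)
  show "((\<lambda>s. - (s * K)) \<longlongrightarrow> 0) (at_right 0)"
    by (auto intro!: tendsto_eq_intros)
  show "\<forall>\<^sub>F s in at_right 0. - (s * K) \<le> D"
    unfolding eventually_at_right_field by (intro exI[of _ 1]) (simp add: assms)
qed simp

lemma cvx_subdiff_of_quadratic_minorant:
  fixes \<phi> :: "'a::real_inner \<Rightarrow> real"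
  assumes cvx: "convex_on UNIV \<phi>"
    and minorant: "\<And>y. \<phi> x + inner g (y - x) - K * (norm (y - x))\<^sup>2 \<le> \<phi> y"
  shows "g \<in> cvx_subdiff \<phi> x"
  unfolding cvx_subdiff_def
proof (intro CollectI allI)
  fix z
  define w where "w = z - x"
  have "- (s * (K * (norm w)\<^sup>2)) \<le> \<phi> z - \<phi> x - inner g w" if s: "0 < s" "s \<le> 1" for s
  proof -
    have "\<phi> (x + s *\<^sub>R w) \<le> (1 - s) * \<phi> x + s * \<phi> z"
      using convex_onD[OF cvx, of s x z] s by (simp add: w_def algebra_simps)
    moreover have "\<phi> x + s * inner g w - K * s\<^sup>2 * (norm w)\<^sup>2 \<le> \<phi> (x + s *\<^sub>R w)"
      using minorant[of "x + s *\<^sub>R w"] s by (simp add: power_mult_distrib)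
    ultimately have "s * (- (s * (K * (norm w)\<^sup>2))) \<le> s * (\<phi> z - \<phi> x - inner g w)"
      by (simp add: algebra_simps power2_eq_square)
    then show ?thesis using s(1) by (rule mult_left_le_imp_le)
  qed
  then have "0 \<le> \<phi> z - \<phi> x - inner g w" by (rule nonneg_of_forall_small_ge)
  then show "\<phi> x + inner g (z - x) \<le> \<phi> z" by (simp add: w_def)
qed

lemma cvx_subdiff_of_quadratic_majorant:
  fixes \<phi> :: "'a::real_inner \<Rightarrow> real"
  assumes cvx: "convex_on UNIV \<phi>"
    and majorant: "\<And>y. \<phi> y \<le> \<phi> x + inner g (y - x) + K * (norm (y - x))\<^sup>2"
  shows "g \<in> cvx_subdiff \<phi> x"
  unfolding cvx_subdiff_def
proof (intro CollectI allI)
  fix z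
  define w where "w = z - x"
  have "- (s * (K * (norm w)\<^sup>2)) \<le> \<phi> z - \<phi> x - inner g w" if s: "0 < s" "s \<le> 1" for s
  proof -
    define a where "a = s / (1 + s)"
    have "(1 - a) *\<^sub>R (x - s *\<^sub>R w) + a *\<^sub>R z = x + (a - (1 - a) * s) *\<^sub>R w"
      by (simp add: w_def algebra_simps)
    moreover have "a - (1 - a) * s = 0"
      using s by (simp add: a_def field_simps)
    ultimately have "\<phi> x \<le> (1 - a) * \<phi> (x - s *\<^sub>R w) + a * \<phi> z"
      using convex_onD[OF cvx, of a "x - s *\<^sub>R w" z] s by (simp add: a_def)
    then have "(1 + s) * \<phi> x \<le> (1 + s) * ((1 - a) * \<phi> (x - s *\<^sub>R w) + a * \<phi> z)"
      using s by (intro mult_left_mono) auto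
    also have "\<dots> = ((1 + s) * (1 - a)) * \<phi> (x - s *\<^sub>R w) + ((1 + s) * a) * \<phi> z"
      by (simp add: algebra_simps)
    also have "\<dots> = \<phi> (x - s *\<^sub>R w) + s * \<phi> z"
      using s by (simp add: a_def field_simps)
    finally have "(1 + s) * \<phi> x \<le> \<phi> (x - s *\<^sub>R w) + s * \<phi> z" .
    moreover have "\<phi> (x - s *\<^sub>R w) \<le> \<phi> x - s * inner g w + K * s\<^sup>2 * (norm w)\<^sup>2"
      using majorant[of "x - s *\<^sub>R w"] s by (simp add: power_mult_distrib)
    ultimately have "s * (- (s * (K * (norm w)\<^sup>2))) \<le> s * (\<phi> z - \<phi> x - inner g w)"
      by (simp add: algebra_simps power2_eq_square)
    then show ?thesis using s(1) by (rule mult_left_le_imp_le)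
  qed
  then have "0 \<le> \<phi> z - \<phi> x - inner g w" by (rule nonneg_of_forall_small_ge)
  then show "\<phi> x + inner g (z - x) \<le> \<phi> z" by (simp add: w_def)
qed

lemma descent_lemma:
  fixes h :: "'a::real_inner \<Rightarrow> real"
  assumes cvx: "convex_on UNIV (\<lambda>y. L / 2 * (norm y)\<^sup>2 - h y)" and g: "g \<in> cvx_subdiff h x"
  shows "h z \<le> h x + inner g (z - x) + L / 2 * (norm (z - x))\<^sup>2"
proof -
  have "L *\<^sub>R x - g \<in> cvx_subdiff (\<lambda>y. L / 2 * (norm y)\<^sup>2 - h y) x"
  proof (rule cvx_subdiff_of_quadratic_majorant[OF cvx])
    fix y
    have "h x + inner g (y - x) \<le> h y"
      using g by (simp add: cvx_subdiff_def)
    then show "L / 2 * (norm y)\<^sup>2 - h y \<le> L / 2 * (norm x)\<^sup>2 - h x + inner (L *\<^sub>R x - g) (y - x)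
        + L / 2 * (norm (y - x))\<^sup>2"
      unfolding norm_diff_square_eq[of y x] by (simp add: inner_diff_left algebra_simps)
  qed
  then have "L / 2 * (norm x)\<^sup>2 - h x + inner (L *\<^sub>R x - g) (z - x) \<le> L / 2 * (norm z)\<^sup>2 - h z"
    by (simp add: cvx_subdiff_def)
  then show ?thesis
    unfolding norm_diff_square_eq[of z x] by (simp add: algebra_simps)
qed

lemma cvx_subdiff_cocoercive:
  fixes h :: "'a::real_inner \<Rightarrow> real"
  assumes cvx: "convex_on UNIV (\<lambda>y. L / 2 * (norm y)\<^sup>2 - h y)" and L: "0 < L"
    and gx: "gx \<in> cvx_subdiff h x" and gy: "gy \<in> cvx_subdiff h y"
  shows "h x + inner gx (y - x) + 1 / (2 * L) * (norm (gx - gy))\<^sup>2 \<le> h y"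
proof -
  define v where "v = gy - gx"
  define z where "z = y - (1 / L) *\<^sub>R v"
  have "h x + inner gx (z - x) \<le> h z"
    using gx by (simp add: cvx_subdiff_def)
  also have "h z \<le> h y + inner gy (z - y) + L / 2 * (norm (z - y))\<^sup>2"
    by (rule descent_lemma[OF cvx gy])
  finally have "h x + inner gx (z - x) \<le> h y + inner gy (z - y) + L / 2 * (norm (z - y))\<^sup>2" .
  moreover have "inner gx (z - x) = inner gx (y - x) - inner gx v / L"
    by (simp add: z_def inner_diff_right)
  moreover have "inner gy (z - y) = - (inner gy v / L)"
    by (simp add: z_def)
  moreover have "L / 2 * (norm (z - y))\<^sup>2 = (norm v)\<^sup>2 / (2 * L)"
    using L by (simp add: z_def field_simps power2_eq_square)
  moreover have "inner gy v / L - inner gx v / L = (norm v)\<^sup>2 / (2 * L) + (norm v)\<^sup>2 / (2 * L)"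
    by (simp add: v_def inner_diff_left power2_norm_eq_inner diff_divide_distrib[symmetric])
  ultimately have "h x + inner gx (y - x) + (norm v)\<^sup>2 / (2 * L) \<le> h y"
    by linarith
  then show ?thesis
    by (simp add: v_def norm_minus_commute)
qed

lemma inv_ext_simps [simp]:
  "inv_ext \<infinity> = 0"
  "inv_ext (ereal a) = 1 / a"
  by (simp_all add: inv_ext_def)

lemma FmuL_interpolation:
  fixes f :: "'a::euclidean_space \<Rightarrow> real"
  assumes F: "FmuL \<mu> L f" and g: "g \<in> subdiff \<mu> f x" and h: "h \<in> subdiff \<mu> f y"
  shows "f x + inner g (y - x) + \<mu> / 2 * (norm (y - x))\<^sup>2
      + inv_ext (L - ereal \<mu>) / 2 * (norm (g - h - \<mu> *\<^sub>R (x - y)))\<^sup>2 \<le> f y"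
proof -
  define \<phi> where "\<phi> = (\<lambda>y. f y - \<mu> / 2 * (norm y)\<^sup>2)"
  obtain g\<phi> where g\<phi>: "g = g\<phi> + \<mu> *\<^sub>R x" "g\<phi> \<in> cvx_subdiff \<phi> x"
    using g by (auto simp: subdiff_def \<phi>_def)
  obtain h\<phi> where h\<phi>: "h = h\<phi> + \<mu> *\<^sub>R y" "h\<phi> \<in> cvx_subdiff \<phi> y"
    using h by (auto simp: subdiff_def \<phi>_def)
  have "\<phi> x + inner g\<phi> (y - x) + inv_ext (L - ereal \<mu>) / 2 * (norm (g\<phi> - h\<phi>))\<^sup>2 \<le> \<phi> y"
  proof (cases L)
    case (real L')
    have "\<mu> < L'"
      using F by (simp add: FmuL_def real)
    have "convex_on UNIV (\<lambda>y. L' / 2 * (norm y)\<^sup>2 - f y)"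
      using F by (simp add: FmuL_def real)
    also have "(\<lambda>y. L' / 2 * (norm y)\<^sup>2 - f y) = (\<lambda>y. (L' - \<mu>) / 2 * (norm y)\<^sup>2 - \<phi> y)"
      by (simp add: \<phi>_def field_simps)
    finally have "\<phi> x + inner g\<phi> (y - x) + 1 / (2 * (L' - \<mu>)) * (norm (g\<phi> - h\<phi>))\<^sup>2 \<le> \<phi> y"
      using \<open>\<mu> < L'\<close> g\<phi>(2) h\<phi>(2) by (intro cvx_subdiff_cocoercive) auto
    then show ?thesis
      by (simp add: real algebra_simps)
  next
    case PInf
    then show ?thesis
      using g\<phi>(2) by (simp add: cvx_subdiff_def)
  next
    case MInf
    then show ?thesis
      using F by (simp add: FmuL_def)
  qed
  moreover have "g\<phi> - h\<phi> = g - h - \<mu> *\<^sub>R (x - y)"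
    using g\<phi>(1) h\<phi>(1) by (simp add: algebra_simps)
  ultimately show ?thesis
    using g\<phi>(1) unfolding \<phi>_def norm_diff_square_eq[of y x]
    by (simp add: inner_add_left algebra_simps)
qed

lemma subdiff_of_argmin:
  fixes f :: "'a::real_inner \<Rightarrow> real"
  assumes cvx: "convex_on UNIV (\<lambda>y. f y - \<mu> / 2 * (norm y)\<^sup>2)"
    and argmin: "\<And>w. f xp - inner g xp \<le> f w - inner g w"
  shows "g \<in> subdiff \<mu> f xp"
proof -
  have "g - \<mu> *\<^sub>R xp \<in> cvx_subdiff (\<lambda>y. f y - \<mu> / 2 * (norm y)\<^sup>2) xp"
  proof (rule cvx_subdiff_of_quadratic_minorant[OF cvx, where K = "\<mu> / 2"])
    fix y
    show "f xp - \<mu> / 2 * (norm xp)\<^sup>2 + inner (g - \<mu> *\<^sub>R xp) (y - xp) - \<mu> / 2 * (norm (y - xp))\<^sup>2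
        \<le> f y - \<mu> / 2 * (norm y)\<^sup>2"
      using argmin[of y] unfolding norm_diff_square_eq[of y xp]
      by (simp add: inner_diff_left inner_diff_right algebra_simps)
  qed
  then show ?thesis
    unfolding subdiff_def by force
qed

section \<open>Interpolation certificates\<close>

text \<open>
  Multipliers showing that the two interpolation inequalities of a function in F(mu, L), with
  c = 1/(L - mu), weighted by (beta - 1)/2 (from x to y) and (beta + 1)/2 (from y to x), dominate
  sigma/2 |g - h|^2 + v/2 |x - y|^2: for p = g - h and d = x - y the remainder is
  (beta c - sigma) |p + alpha d|^2 plus a nonnegative multiple of |d|^2.
\<close>

definition interpolation_certificate :: "real \<Rightarrow> real \<Rightarrow> real \<Rightarrow> real \<Rightarrow> bool" where
  "interpolation_certificate \<mu> c \<sigma> v \<longleftrightarrow> (\<exists>\<beta> \<alpha>. 1 \<le> \<beta> \<and> \<sigma> \<le> \<beta> * c \<and>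
     (\<beta> * c - \<sigma>) * \<alpha> + (\<beta> - 1) / 2 + \<beta> * c * \<mu> = 0 \<and>
     v + (\<beta> * c - \<sigma>) * \<alpha>\<^sup>2 \<le> \<beta> * \<mu> + \<beta> * c * \<mu>\<^sup>2)"

lemma interpolation_certificate_one_sided:
  assumes "\<sigma> \<le> c" and t: "t * (c - \<sigma>) = c * \<mu>"
  shows "interpolation_certificate \<mu> c \<sigma> (\<mu> + c * \<mu> * (\<mu> - t))"
proof -
  have "(c - \<sigma>) * (- t)\<^sup>2 = t * (t * (c - \<sigma>))"
    by (simp add: power2_eq_square algebra_simps)
  also have "\<dots> = c * \<mu> * t"
    by (simp only: t) (simp add: algebra_simps)
  finally have "\<mu> + c * \<mu> * (\<mu> - t) + (c - \<sigma>) * (- t)\<^sup>2 = 1 * \<mu> + 1 * c * \<mu>\<^sup>2"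
    by (simp add: power2_eq_square algebra_simps)
  moreover have "(c - \<sigma>) * (- t) + (1 - 1) / 2 + 1 * c * \<mu> = 0"
    using t by (simp add: algebra_simps)
  ultimately show ?thesis
    unfolding interpolation_certificate_def using assms(1)
    by (intro exI[of _ 1] exI[of _ "- t"]) simp
qed

lemma interpolation_certificate_curvature_shift:
  assumes b: "\<mu> < b" and c: "c * (b - \<mu>) = 1" and "1 \<le> \<sigma> * b" and "1 \<le> \<sigma> * (b + \<mu>)"
  shows "interpolation_certificate \<mu> c \<sigma> (b - \<sigma> * b\<^sup>2)"
proof -
  define \<beta> where "\<beta> = 2 * \<sigma> * b - 1"
  have "(\<beta> * c - \<sigma>) * (b - \<mu>) = \<beta> * (c * (b - \<mu>)) - \<sigma> * (b - \<mu>)"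
    by (simp add: algebra_simps)
  also have "\<dots> = \<sigma> * (b + \<mu>) - 1"
    by (simp only: c) (simp add: \<beta>_def algebra_simps)
  finally have "0 \<le> (\<beta> * c - \<sigma>) * (b - \<mu>)"
    using assms(4) by simp
  then have "\<sigma> \<le> \<beta> * c"
    using b by (simp add: zero_le_mult_iff)
  moreover have "(\<beta> * c - \<sigma>) * (- b) + (\<beta> - 1) / 2 + \<beta> * c * \<mu> = 0"
  proof -
    have "(\<beta> * c - \<sigma>) * (- b) + (\<beta> - 1) / 2 + \<beta> * c * \<mu>
        = \<sigma> * b + (\<beta> - 1) / 2 - \<beta> * (c * (b - \<mu>))"
      by (simp add: algebra_simps)
    then show ?thesis
      by (simp only: c) (simp add: \<beta>_def field_simps)
  qed
  moreover have "b - \<sigma> * b\<^sup>2 + (\<beta> * c - \<sigma>) * (- b)\<^sup>2 = \<beta> * \<mu> + \<beta> * c * \<mu>\<^sup>2"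
  proof -
    have "b - \<sigma> * b\<^sup>2 + (\<beta> * c - \<sigma>) * (- b)\<^sup>2 - (\<beta> * \<mu> + \<beta> * c * \<mu>\<^sup>2)
        = b - 2 * \<sigma> * b\<^sup>2 + \<beta> * (c * (b - \<mu>)) * (b + \<mu>) - \<beta> * \<mu>"
      by (simp add: power2_eq_square algebra_simps)
    then show ?thesis
      by (simp only: c) (simp add: \<beta>_def power2_eq_square algebra_simps)
  qed
  ultimately show ?thesis
    unfolding interpolation_certificate_def using assms(3)
    by (intro exI[of _ \<beta>] exI[of _ "- b"]) (auto simp: \<beta>_def)
qed

lemma interpolation_certificate_modulus_shift:
  assumes "\<sigma> * \<mu> \<le> 0" and "\<sigma> \<le> c * (1 - 2 * \<sigma> * \<mu>)"
  shows "interpolation_certificate \<mu> c \<sigma> (\<mu> - \<sigma> * \<mu>\<^sup>2)"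
  unfolding interpolation_certificate_def using assms
  by (intro exI[of _ "1 - 2 * \<sigma> * \<mu>"] exI[of _ "- \<mu>"])
    (auto simp: power2_eq_square algebra_simps)

lemma interpolation_certificate_zero: "0 \<le> c \<Longrightarrow> interpolation_certificate \<mu> c 0 \<mu>"
  using interpolation_certificate_modulus_shift[of 0 \<mu> c] by simp

lemma interpolation_certificate_unshifted:
  assumes pos: "0 < 1 + 2 * c * \<mu>" and "\<mu> * c \<le> 0" and \<sigma>: "\<sigma> * (1 + 2 * c * \<mu>) \<le> c"
  shows "interpolation_certificate \<mu> c \<sigma> (\<mu> * (1 + c * \<mu>) / (1 + 2 * c * \<mu>))"
proof -
  define \<beta> where "\<beta> = 1 / (1 + 2 * c * \<mu>)"
  have "1 \<le> \<beta>"
    using assms by (simp add: \<beta>_def)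
  moreover have "\<sigma> \<le> \<beta> * c"
    using pos \<sigma> by (simp add: \<beta>_def field_simps)
  moreover have "(\<beta> - 1) / 2 + \<beta> * c * \<mu> = 0"
    using pos by (simp add: \<beta>_def field_simps)
  moreover have "\<mu> * (1 + c * \<mu>) / (1 + 2 * c * \<mu>) = \<beta> * \<mu> + \<beta> * c * \<mu>\<^sup>2"
    using pos by (simp add: \<beta>_def power2_eq_square add_divide_distrib[symmetric] algebra_simps)
  ultimately show ?thesis
    unfolding interpolation_certificate_def by (intro exI[of _ \<beta>] exI[of _ 0]) auto
qed

lemma interpolation_certificate_quadratic:
  fixes p d :: "'a::real_inner"
  assumes "interpolation_certificate \<mu> c \<sigma> v"
  obtains \<beta> where "1 \<le> \<beta>"
    "\<sigma> / 2 * (norm p)\<^sup>2 + v / 2 * (norm d)\<^sup>2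
       \<le> \<beta> * (\<mu> / 2 * (norm d)\<^sup>2 + c / 2 * (norm (p - \<mu> *\<^sub>R d))\<^sup>2) - (\<beta> - 1) / 2 * inner p d"
proof -
  obtain \<beta> \<alpha> where \<beta>: "1 \<le> \<beta>" and A: "\<sigma> \<le> \<beta> * c"
    and eq: "(\<beta> - 1) / 2 = - ((\<beta> * c - \<sigma>) * \<alpha> + \<beta> * c * \<mu>)"
    and v: "0 \<le> \<beta> * \<mu> + \<beta> * c * \<mu>\<^sup>2 - v - (\<beta> * c - \<sigma>) * \<alpha>\<^sup>2"
    using assms unfolding interpolation_certificate_def by (auto simp: algebra_simps)
  have "\<beta> * (\<mu> / 2 * (norm d)\<^sup>2 + c / 2 * (norm (p - \<mu> *\<^sub>R d))\<^sup>2) - (\<beta> - 1) / 2 * inner p d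
      - (\<sigma> / 2 * (norm p)\<^sup>2 + v / 2 * (norm d)\<^sup>2)
    = (\<beta> * c - \<sigma>) / 2 * (norm (p + \<alpha> *\<^sub>R d))\<^sup>2
      + (\<beta> * \<mu> + \<beta> * c * \<mu>\<^sup>2 - v - (\<beta> * c - \<sigma>) * \<alpha>\<^sup>2) / 2 * (norm d)\<^sup>2"
    unfolding eq norm_add_scaleR_square norm_diff_scaleR_square
    by (simp add: field_simps power2_eq_square)
  also have "\<dots> \<ge> 0"
    using A v by simp
  finally show ?thesis
    using \<beta> that by simp
qed

lemma FmuL_certificate_bound:
  fixes f :: "'a::euclidean_space \<Rightarrow> real"
  assumes F: "FmuL \<mu> L f" and g: "g \<in> subdiff \<mu> f x" and h: "h \<in> subdiff \<mu> f y"
    and cert: "interpolation_certificate \<mu> (inv_ext (L - ereal \<mu>)) \<sigma> v"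
  shows "\<sigma> / 2 * (norm (g - h))\<^sup>2 + v / 2 * (norm (x - y))\<^sup>2 \<le> f x - f y - inner h (x - y)"
proof -
  define Q where "Q = \<mu> / 2 * (norm (x - y))\<^sup>2
    + inv_ext (L - ereal \<mu>) / 2 * (norm (g - h - \<mu> *\<^sub>R (x - y)))\<^sup>2"
  obtain \<beta> where \<beta>: "1 \<le> \<beta>" and quadratic:
    "\<sigma> / 2 * (norm (g - h))\<^sup>2 + v / 2 * (norm (x - y))\<^sup>2 \<le> \<beta> * Q - (\<beta> - 1) / 2 * inner (g - h) (x - y)"
    using interpolation_certificate_quadratic[OF cert] unfolding Q_def by blast
  have "0 \<le> f y - f x + inner g (x - y) - Q"
    using FmuL_interpolation[OF F g h] by (simp add: Q_def norm_minus_commute inner_diff_right)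
  moreover have "0 \<le> f x - f y - inner h (x - y) - Q"
  proof -
    have "h - g - \<mu> *\<^sub>R (y - x) = - (g - h - \<mu> *\<^sub>R (x - y))"
      by (simp add: algebra_simps)
    then have "norm (h - g - \<mu> *\<^sub>R (y - x)) = norm (g - h - \<mu> *\<^sub>R (x - y))"
      by (metis norm_minus_cancel)
    then show ?thesis
      using FmuL_interpolation[OF F h g] by (simp add: Q_def)
  qed
  ultimately have "0 \<le> (\<beta> + 1) / 2 * (f x - f y - inner h (x - y) - Q)
      + (\<beta> - 1) / 2 * (f y - f x + inner g (x - y) - Q)"
    using \<beta> by (intro add_nonneg_nonneg mult_nonneg_nonneg) auto
  also have "\<dots> = f x - f y - inner h (x - y) - (\<beta> * Q - (\<beta> - 1) / 2 * inner (g - h) (x - y))"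
    by (simp add: inner_diff_left inner_diff_right field_simps)
  finally show ?thesis
    using quadratic by linarith
qed

definition dca_certificate :: "real \<Rightarrow> real \<Rightarrow> real \<Rightarrow> real \<Rightarrow> real \<Rightarrow> real \<Rightarrow> bool" where
  "dca_certificate \<mu>1 \<mu>2 c1 c2 \<sigma> \<sigma>' \<longleftrightarrow> (\<exists>v1 v2. interpolation_certificate \<mu>1 c1 \<sigma> v1 \<and>
     interpolation_certificate \<mu>2 c2 \<sigma>' v2 \<and> 0 \<le> v1 + v2)"

lemma dca_certificate_swap:
  "dca_certificate \<mu>1 \<mu>2 c1 c2 \<sigma> \<sigma>' \<Longrightarrow> dca_certificate \<mu>2 \<mu>1 c2 c1 \<sigma>' \<sigma>"
  unfolding dca_certificate_def by (metis add.commute)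

lemma dca_step_bound:
  fixes f1 f2 :: "'a::euclidean_space \<Rightarrow> real"
  assumes f1: "FmuL \<mu>1 L1 f1" and f2: "FmuL \<mu>2 L2 f2"
    and g1: "g1 \<in> subdiff \<mu>1 f1 x" and g2_xp: "g2 \<in> subdiff \<mu>1 f1 xp"
    and g2: "g2 \<in> subdiff \<mu>2 f2 x" and g2p: "g2p \<in> subdiff \<mu>2 f2 xp"
    and cert: "dca_certificate \<mu>1 \<mu>2 (inv_ext (L1 - ereal \<mu>1)) (inv_ext (L2 - ereal \<mu>2)) \<sigma> \<sigma>'"
  shows "\<sigma> * (1/2) * (norm (g1 - g2))\<^sup>2 + \<sigma>' * (1/2) * (norm (g2 - g2p))\<^sup>2
    \<le> f1 x - f2 x - (f1 xp - f2 xp)"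
proof -
  obtain v1 v2 where
    cert1: "interpolation_certificate \<mu>1 (inv_ext (L1 - ereal \<mu>1)) \<sigma> v1" and
    cert2: "interpolation_certificate \<mu>2 (inv_ext (L2 - ereal \<mu>2)) \<sigma>' v2" and
    v: "0 \<le> v1 + v2"
    using cert unfolding dca_certificate_def by blast
  have "\<sigma> / 2 * (norm (g1 - g2))\<^sup>2 + v1 / 2 * (norm (x - xp))\<^sup>2 \<le> f1 x - f1 xp - inner g2 (x - xp)"
    by (rule FmuL_certificate_bound[OF f1 g1 g2_xp cert1])
  moreover have "\<sigma>' / 2 * (norm (g2 - g2p))\<^sup>2 + v2 / 2 * (norm (x - xp))\<^sup>2
      \<le> f2 xp - f2 x + inner g2 (x - xp)"
    using FmuL_certificate_bound[OF f2 g2p g2 cert2]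
    by (simp add: norm_minus_commute inner_diff_right)
  moreover have "0 \<le> (v1 + v2) / 2 * (norm (x - xp))\<^sup>2"
    using v by simp
  ultimately show ?thesis
    by (simp add: field_simps)
qed

section \<open>Certificates on the six parameter domains\<close>

lemma inv_ext_nonneg: "0 \<le> L \<Longrightarrow> 0 \<le> inv_ext L"
  by (cases L) auto

lemma inv_ext_minus_nonneg: "ereal \<mu> < L \<Longrightarrow> 0 \<le> inv_ext (L - ereal \<mu>)"
  by (cases L) auto

lemma inv_ext_antimono: "0 < L \<Longrightarrow> L \<le> L' \<Longrightarrow> inv_ext L' \<le> inv_ext L"
  by (cases L; cases L') (auto simp: frac_le)

lemma mult_inv_ext_less_one: "ereal \<mu> < L \<Longrightarrow> 0 < L \<Longrightarrow> \<mu> * inv_ext L < 1"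
  by (cases L) auto

lemma inv_ext_minus_mult:
  "ereal \<mu> < L \<Longrightarrow> L \<noteq> 0 \<Longrightarrow> inv_ext (L - ereal \<mu>) * (1 - \<mu> * inv_ext L) = inv_ext L"
  by (cases L) (auto simp: field_simps)

lemma Bpar_mult:
  "\<mu>1 \<noteq> 0 \<Longrightarrow> \<mu>2 \<noteq> 0 \<Longrightarrow> Bpar \<mu>1 \<mu>2 L * (\<mu>1 * \<mu>2) = \<mu>1 + \<mu>2 + inv_ext L * \<mu>1 * \<mu>2"
  by (simp add: Bpar_def field_simps)

lemma Bpar_ereal_mult:
  "\<mu>1 \<noteq> 0 \<Longrightarrow> \<mu>2 \<noteq> 0 \<Longrightarrow> b \<noteq> 0 \<Longrightarrow>
    Bpar \<mu>1 \<mu>2 (ereal b) * (\<mu>1 * \<mu>2 * b) = \<mu>1 * b + \<mu>2 * b + \<mu>1 * \<mu>2"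
  using Bpar_mult[of \<mu>1 \<mu>2 "ereal b"] by (simp add: field_simps)

text \<open>
  The sign of E decides the condition 1 <= sigma1+ (L2 + mu2) under which the weights of
  interpolation_certificate_curvature_shift work for f2 on D1.
\<close>

lemma Epar_mult:
  assumes "\<mu>1 \<noteq> 0" and "\<mu>2 \<noteq> 0" and "b \<noteq> 0" and "\<mu>1 * inv_ext L1 \<noteq> 1"
  shows "(1 / b * (1 + \<mu>1 * (1 / b - inv_ext L1) / (1 - \<mu>1 * inv_ext L1)) * (b + \<mu>2) - 1)
      * (1 - \<mu>1 * inv_ext L1) = \<mu>2 * Epar \<mu>1 \<mu>2 L1 (ereal b) * (\<mu>1 / b)"
  using assms unfolding Epar_def by (simp add: field_simps)

text \<open>
  L1 = infinity is included: then l1 = 0, and the hypothesis on c1 forces c1 = 0.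
\<close>

lemma dca_certificate_D1_real:
  fixes m n b l1 c1 :: real
  defines "\<sigma>' \<equiv> 1 / b * (1 + m * (1 / b - l1) / (1 - m * l1))"
  assumes m: "0 \<le> m" and b: "0 < b" "n < b"
    and l1: "0 \<le> l1" "l1 \<le> 1 / b" "m * l1 < 1" and c1: "c1 * (1 - m * l1) = l1"
    and \<sigma>'_bound: "1 \<le> \<sigma>' * (b + n)"
  shows "dca_certificate m n c1 (1 / (b - n)) ((1 - m * (1 / b)) * c1) \<sigma>'"
proof -
  have c1_eq: "c1 = l1 / (1 - m * l1)"
    using c1 l1 by (simp add: eq_divide_eq)
  then have "0 \<le> c1"
    using l1 by simp
  have "\<sigma>' * b = 1 + m * (1 / b - l1) / (1 - m * l1)"
    using b by (simp add: \<sigma>'_def)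
  then have "1 \<le> \<sigma>' * b"
    using l1 m by simp
  have "interpolation_certificate m c1 ((1 - m * (1 / b)) * c1) (m + c1 * m * (m - b))"
    using \<open>0 \<le> c1\<close> m b by (intro interpolation_certificate_one_sided) (auto simp: algebra_simps)
  moreover have "interpolation_certificate n (1 / (b - n)) \<sigma>' (b - \<sigma>' * b\<^sup>2)"
    using b \<open>1 \<le> \<sigma>' * b\<close> \<sigma>'_bound by (intro interpolation_certificate_curvature_shift) auto
  moreover have "m + c1 * m * (m - b) + (b - \<sigma>' * b\<^sup>2) = 0"
    unfolding c1_eq \<sigma>'_def using l1 b by (simp add: power2_eq_square field_simps)
  ultimately show ?thesis
    unfolding dca_certificate_def by force
qed

lemma dca_certificate_D1:
  fixes m n :: real and L1 L2 :: ereal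
  assumes m1: "ereal m < L1" and n2: "ereal n < L2" and smooth: "L1 < \<infinity> \<or> L2 < \<infinity>"
    and mus: "0 < m + n \<or> (m = 0 \<and> n = 0)"
    and L21: "L2 \<le> L1" and mL2: "ereal m \<le> L2" and m: "0 \<le> m"
    and E: "0 \<le> n \<or> (n < 0 \<and> Epar m n L1 L2 \<le> 0)"
  shows "dca_certificate m n (inv_ext (L1 - ereal m)) (inv_ext (L2 - ereal n))
    ((1 - m * inv_ext L2) * inv_ext (L1 - ereal m))
    (inv_ext L2 * (1 + m * (inv_ext L2 - inv_ext L1) / (1 - m * inv_ext L1)))"
proof -
  obtain b where L2: "L2 = ereal b"
    using smooth L21 n2 by (cases L2) auto
  have b: "0 < b" "n < b"
    using n2 mL2 mus m by (auto simp: L2)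
  have "0 < L1"
    using L21 b by (cases L1) (auto simp: L2)
  define l1 \<sigma>' where "l1 = inv_ext L1" and "\<sigma>' = 1 / b * (1 + m * (1 / b - l1) / (1 - m * l1))"
  have l1: "0 \<le> l1" "l1 \<le> 1 / b" "m * l1 < 1"
    using inv_ext_nonneg[of L1] inv_ext_antimono[of L2 L1] mult_inv_ext_less_one[OF m1]
      \<open>0 < L1\<close> L21 b by (auto simp: l1_def L2)
  have "1 \<le> \<sigma>' * (b + n)"
    using E
  proof
    assume "0 \<le> n"
    have "\<sigma>' * (b + n) = (1 + m * (1 / b - l1) / (1 - m * l1)) * (1 + n / b)"
      using b by (simp add: \<sigma>'_def field_simps)
    moreover have "1 * 1 \<le> (1 + m * (1 / b - l1) / (1 - m * l1)) * (1 + n / b)"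
      using m l1 b \<open>0 \<le> n\<close> by (intro mult_mono) auto
    ultimately show ?thesis
      by simp
  next
    assume n: "n < 0 \<and> Epar m n L1 L2 \<le> 0"
    then have "0 < m"
      using mus by auto
    have "(\<sigma>' * (b + n) - 1) * (1 - m * l1) = n * Epar m n L1 L2 * (m / b)"
      using Epar_mult[of m n b L1] n \<open>0 < m\<close> b l1 by (simp add: \<sigma>'_def l1_def L2)
    also have "\<dots> \<ge> 0"
      using n \<open>0 < m\<close> b by (intro mult_nonneg_nonneg mult_nonpos_nonpos) auto
    finally show ?thesis
      using l1 by (simp add: zero_le_mult_iff)
  qed
  then have "dca_certificate m n (inv_ext (L1 - ereal m)) (1 / (b - n))
      ((1 - m * (1 / b)) * inv_ext (L1 - ereal m)) \<sigma>'"
    using m b l1 inv_ext_minus_mult[OF m1] \<open>0 < L1\<close> unfolding \<sigma>'_def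
    by (intro dca_certificate_D1_real) (auto simp: l1_def)
  then show ?thesis
    by (simp add: l1_def \<sigma>'_def L2)
qed

lemma dca_certificate_D2:
  fixes m n :: real and L1 L2 :: ereal
  assumes "ereal m < L1" and "ereal n < L2" and "L1 < \<infinity> \<or> L2 < \<infinity>"
    and "0 < m + n \<or> (m = 0 \<and> n = 0)"
    and "L1 \<le> L2" and "ereal n \<le> L1" and "0 \<le> n" and "0 \<le> m"
  shows "dca_certificate m n (inv_ext (L1 - ereal m)) (inv_ext (L2 - ereal n))
    (inv_ext L1 * (1 + n * (inv_ext L1 - inv_ext L2) / (1 - n * inv_ext L2)))
    ((1 - n * inv_ext L1) * inv_ext (L2 - ereal n))"
  by (rule dca_certificate_swap, rule dca_certificate_D1) (use assms in \<open>auto simp: add.commute\<close>)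

lemma interpolation_certificate_negative_modulus:
  fixes n :: real and L :: ereal
  assumes n2: "ereal n < L" and n: "n < 0" and L: "0 < L" and pos: "0 < 1 + n * inv_ext L"
  shows "interpolation_certificate n (inv_ext (L - ereal n)) (inv_ext (L + ereal n))
    (n / (1 + n * inv_ext L))"
proof -
  define l c \<sigma> where "l = inv_ext L" and "c = inv_ext (L - ereal n)" and "\<sigma> = inv_ext (L + ereal n)"
  have l: "0 \<le> l" and c: "c * (1 - n * l) = l" "0 \<le> c"
    using inv_ext_nonneg[of L] inv_ext_minus_mult[OF n2] inv_ext_minus_nonneg[OF n2] L
    by (auto simp: l_def c_def)
  have "n * l \<le> 0"
    using n l by (simp add: mult_nonpos_nonneg)
  then have pos': "0 < 1 - n * l"
    by simp
  have \<sigma>: "\<sigma> * (1 + n * l) = l"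
  proof (cases L)
    case (real b)
    then have "0 < b"
      using L by simp
    then have "0 < b + n"
      using pos by (simp add: real field_simps)
    then show ?thesis
      using \<open>0 < b\<close> by (simp add: \<sigma>_def l_def real field_simps)
  qed (use n2 in \<open>auto simp: \<sigma>_def l_def\<close>)
  have c_eq: "c = l / (1 - n * l)"
    using c pos' by (simp add: eq_divide_eq)
  have one_plus: "1 + 2 * c * n = (1 + n * l) / (1 - n * l)" "1 + c * n = 1 / (1 - n * l)"
    using pos' unfolding c_eq by (simp_all add: field_simps)
  have "interpolation_certificate n c \<sigma> (n * (1 + c * n) / (1 + 2 * c * n))"
  proof (rule interpolation_certificate_unshifted)
    show "0 < 1 + 2 * c * n"
      using pos pos' unfolding one_plus l_def by simp
    show "n * c \<le> 0"
      using n c by (simp add: mult_nonpos_nonneg)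
    have "\<sigma> * (1 + 2 * c * n) = \<sigma> * (1 + n * l) / (1 - n * l)"
      unfolding one_plus by simp
    then show "\<sigma> * (1 + 2 * c * n) \<le> c"
      unfolding \<sigma> c_eq by simp
  qed
  moreover have "n * (1 + c * n) / (1 + 2 * c * n) = n / (1 + n * l)"
    using pos pos' unfolding one_plus l_def by simp
  ultimately show ?thesis
    by (simp add: c_def \<sigma>_def l_def)
qed

lemma interpolation_certificate_sigma3:
  assumes m: "0 < m" and a: "m < a" and B: "B \<le> 0"
  shows "interpolation_certificate m (1 / (a - m)) (1 / a * B / (B - 1 / a)) (m / (1 - B * m))"
proof -
  have "a * B \<le> 0" "B * m \<le> 0"
    using B m a by (simp_all add: mult_nonneg_nonpos mult_nonpos_nonneg)
  then have u: "0 < 1 - a * B" and w: "0 < 1 - B * m"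
    by simp_all
  then have nz: "a - m \<noteq> 0" "1 - a * B \<noteq> 0" "1 - B * m \<noteq> 0"
    using a by auto
  define \<sigma> t where "\<sigma> = - (B / (1 - a * B))" and "t = m * (1 - a * B) / (1 - B * m)"
  have c_minus: "1 / (a - m) - \<sigma> = (1 - B * m) / ((a - m) * (1 - a * B))"
    using nz unfolding \<sigma>_def by (simp add: field_simps)
  have "interpolation_certificate m (1 / (a - m)) \<sigma> (m + 1 / (a - m) * m * (m - t))"
  proof (rule interpolation_certificate_one_sided)
    have "0 \<le> (1 - B * m) / ((a - m) * (1 - a * B))"
      using a u w by simp
    then show "\<sigma> \<le> 1 / (a - m)"
      unfolding c_minus[symmetric] by simp
    show "t * (1 / (a - m) - \<sigma>) = 1 / (a - m) * m"
      unfolding c_minus t_def using a u w by simp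
  qed
  moreover have "m - t = m * B * (a - m) / (1 - B * m)"
    using nz unfolding t_def by (simp add: field_simps)
  then have "m + 1 / (a - m) * m * (m - t) = m + m * m * B / (1 - B * m)"
    using nz by simp
  also have "\<dots> = m / (1 - B * m)"
    using nz by (simp add: field_simps)
  moreover have "1 / a * B / (B - 1 / a) = \<sigma>"
  proof -
    have "a \<noteq> 0" "a * B - 1 \<noteq> 0"
      using m a u by auto
    then show ?thesis
      using nz by (simp add: \<sigma>_def field_simps)
  qed
  ultimately show ?thesis
    by simp
qed

lemma Bpar_nonpos_balance:
  fixes m n :: real and L :: ereal
  assumes m: "0 < m" and n: "n < 0" and B: "Bpar m n L \<le> 0"
  shows "0 < 1 + n * inv_ext L"
    and "0 \<le> m + n / (1 + n * inv_ext L)"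
    and "m / (1 - Bpar m n L * m) + n / (1 + n * inv_ext L) = 0"
proof -
  define l where "l = inv_ext L"
  have Bmn: "Bpar m n L * (m * n) = m + n + l * m * n"
    using Bpar_mult[of m n L] m n by (simp add: l_def)
  have "m * n < 0"
    using m n by (simp add: mult_pos_neg)
  then have Bmn_nonneg: "0 \<le> Bpar m n L * (m * n)"
    using B by (intro mult_nonpos_nonpos) auto
  then have "0 < m * (1 + n * l)"
    using Bmn n by (simp add: algebra_simps)
  then show pos: "0 < 1 + n * inv_ext L"
    using m by (simp add: zero_less_mult_iff l_def)
  have "m + n / (1 + n * l) = Bpar m n L * (m * n) / (1 + n * l)"
    using pos unfolding Bmn by (simp add: field_simps l_def)
  then show "0 \<le> m + n / (1 + n * inv_ext L)"
    using Bmn_nonneg pos by (simp add: l_def)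
  have "Bpar m n L * m \<le> 0"
    using B m by (simp add: mult_nonpos_nonneg)
  then have "m / (1 - Bpar m n L * m) + n / (1 + n * l)
      = (m * (1 + n * l) + n * (1 - Bpar m n L * m)) / ((1 - Bpar m n L * m) * (1 + n * l))"
    using pos by (simp add: field_simps l_def)
  also have "m * (1 + n * l) + n * (1 - Bpar m n L * m) = 0"
    using Bmn by (simp add: algebra_simps)
  finally show "m / (1 - Bpar m n L * m) + n / (1 + n * inv_ext L) = 0"
    by (simp add: l_def)
qed

lemma dca_certificate_D3:
  fixes m n :: real and L1 L2 :: ereal
  assumes m1: "ereal m < L1" and n2: "ereal n < L2" and n: "n < 0" and m: "0 < m"
    and mL2: "ereal m < L2" and B: "Bpar m n L2 \<le> 0"
  shows "dca_certificate m n (inv_ext (L1 - ereal m)) (inv_ext (L2 - ereal n))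
    (inv_ext L1 * Bpar m n L2 / (Bpar m n L2 - inv_ext L1)) (inv_ext (L2 + ereal n))"
proof -
  have "0 < L2"
    using mL2 m by (cases L2) auto
  have cert2: "interpolation_certificate n (inv_ext (L2 - ereal n)) (inv_ext (L2 + ereal n))
      (n / (1 + n * inv_ext L2))"
    using interpolation_certificate_negative_modulus[OF n2 n \<open>0 < L2\<close>]
      Bpar_nonpos_balance(1)[OF m n B] .
  show ?thesis
  proof (cases L1)
    case PInf
    have "interpolation_certificate m 0 0 m"
      by (rule interpolation_certificate_zero) simp
    then show ?thesis
      using cert2 Bpar_nonpos_balance(2)[OF m n B] unfolding dca_certificate_def
      by (force simp: PInf)
  next
    case (real a)
    then have "inv_ext (L1 - ereal m) = 1 / (a - m)" "inv_ext L1 = 1 / a" "m < a"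
      using m1 by simp_all
    then have "interpolation_certificate m (inv_ext (L1 - ereal m))
        (inv_ext L1 * Bpar m n L2 / (Bpar m n L2 - inv_ext L1)) (m / (1 - Bpar m n L2 * m))"
      using m B by (simp only:) (rule interpolation_certificate_sigma3)
    then show ?thesis
      using cert2 Bpar_nonpos_balance(3)[OF m n B] unfolding dca_certificate_def by force
  qed (use m1 in simp)
qed

lemma interpolation_certificate_sigma4:
  assumes n: "n < 0" and b: "n < b" and s: "0 \<le> s" and sb: "s * (b + n) \<le> n\<^sup>2"
  shows "interpolation_certificate n (1 / (b - n)) (s / n\<^sup>2) (n - s)"
proof -
  define \<sigma> where "\<sigma> = s / n\<^sup>2"
  have "interpolation_certificate n (1 / (b - n)) \<sigma> (n - \<sigma> * n\<^sup>2)"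
  proof (rule interpolation_certificate_modulus_shift)
    show "\<sigma> * n \<le> 0"
      using s n unfolding \<sigma>_def by (intro mult_nonneg_nonpos divide_nonneg_nonneg) auto
    have "\<sigma> * (b + n) \<le> 1"
      using sb n by (simp add: \<sigma>_def pos_divide_le_eq)
    then have "0 \<le> (1 - \<sigma> * (b + n)) / (b - n)"
      using b by simp
    moreover have "1 / (b - n) * (1 - 2 * \<sigma> * n) - \<sigma> = (1 - \<sigma> * (b + n)) / (b - n)"
      using b by (simp add: field_simps)
    ultimately show "\<sigma> \<le> 1 / (b - n) * (1 - 2 * \<sigma> * n)"
      by linarith
  qed
  then show ?thesis
    using n by (simp add: \<sigma>_def)
qed

lemma interpolation_certificate_sigma5:
  assumes b: "0 < b" "n < b" and s: "0 \<le> s" and sb: "b\<^sup>2 \<le> (b + s) * (b + n)"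
  shows "interpolation_certificate n (1 / (b - n)) ((b + s) / b\<^sup>2) (- s)"
proof -
  have "interpolation_certificate n (1 / (b - n)) ((b + s) / b\<^sup>2) (b - (b + s) / b\<^sup>2 * b\<^sup>2)"
  proof (rule interpolation_certificate_curvature_shift)
    show "1 \<le> (b + s) / b\<^sup>2 * b"
      using b s by (simp add: power2_eq_square field_simps)
    show "1 \<le> (b + s) / b\<^sup>2 * (b + n)"
      using b sb by (simp add: field_simps)
  qed (use b in auto)
  then show ?thesis
    using b by simp
qed

lemma Bpar_D4_curvature:
  fixes m n :: real and L2 :: ereal
  assumes m: "0 < m" and n: "n < 0" and mn: "0 < m + n" and n2: "ereal n < L2"
    and L2: "(0 < Bpar m n L2 \<and> ereal m < L2) \<or> (0 < Bpar m n L2 \<and> 0 < L2 \<and> L2 \<le> ereal m) \<or>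
      ((Bpar m n L2 \<le> 0 \<or> L2 = 0) \<and> L2 \<le> 0)"
  obtains b where "L2 = ereal b" and "m * b + n * b + m * n \<le> 0"
proof -
  have "m * n < 0"
    using m n by (simp add: mult_pos_neg)
  obtain b where L2b: "L2 = ereal b"
  proof (cases L2)
    case PInf
    then have "0 < Bpar m n L2"
      using L2 by auto
    moreover have "Bpar m n L2 * (m * n) > 0"
      using Bpar_mult[of m n L2] m n mn by (simp add: PInf)
    ultimately show ?thesis
      using m n by (simp add: zero_less_mult_iff)
  qed (use n2 in auto)
  moreover have "m * b + n * b + m * n \<le> 0"
  proof (cases "b = 0")
    case False
    then have eq: "Bpar m n L2 * (m * n * b) = m * b + n * b + m * n"
      using Bpar_ereal_mult m n by (simp add: L2b)
    have "(0 < Bpar m n L2 \<and> 0 < b) \<or> (Bpar m n L2 \<le> 0 \<and> b < 0)"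
      using L2 False m by (auto simp: L2b)
    then show ?thesis
    proof
      assume h: "0 < Bpar m n L2 \<and> 0 < b"
      then have "m * n * b < 0"
        using \<open>m * n < 0\<close> by (simp add: mult_neg_pos)
      then show ?thesis
        using h eq by (metis mult_pos_neg order_less_imp_le)
    next
      assume h: "Bpar m n L2 \<le> 0 \<and> b < 0"
      then have "0 < m * n * b"
        using \<open>m * n < 0\<close> by (simp add: mult_neg_neg)
      then show ?thesis
        using h eq by (metis mult_nonpos_nonneg order_less_imp_le)
    qed
  qed (use \<open>m * n < 0\<close> in simp)
  ultimately show ?thesis
    using that by blast
qed

lemma dca_certificate_D4:
  fixes m n :: real and L1 L2 :: ereal
  assumes m1: "ereal m < L1" and n2: "ereal n < L2" and n: "n < 0" and mn: "0 < m + n"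
    and L2: "(0 < Bpar m n L2 \<and> ereal m < L2) \<or> (0 < Bpar m n L2 \<and> 0 < L2 \<and> L2 \<le> ereal m) \<or>
      ((Bpar m n L2 \<le> 0 \<or> L2 = 0) \<and> L2 \<le> 0)"
  shows "dca_certificate m n (inv_ext (L1 - ereal m)) (inv_ext (L2 - ereal n)) 0 ((m + n) / n\<^sup>2)"
proof -
  have m: "0 < m"
    using n mn by simp
  obtain b where L2b: "L2 = ereal b" and "m * b + n * b + m * n \<le> 0"
    using Bpar_D4_curvature[OF m n mn n2 L2] .
  then have "interpolation_certificate n (1 / (b - n)) ((m + n) / n\<^sup>2) (- m)"
    using interpolation_certificate_sigma4[of n b "m + n"] n mn n2
    by (simp add: L2b power2_eq_square algebra_simps)
  moreover have "interpolation_certificate m (inv_ext (L1 - ereal m)) 0 m"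
    using inv_ext_minus_nonneg[OF m1] by (rule interpolation_certificate_zero)
  ultimately show ?thesis
    unfolding dca_certificate_def by (force simp: L2b)
qed

lemma dca_certificate_D5:
  fixes m n :: real and L1 L2 :: ereal
  assumes m1: "ereal m < L1" and n2: "ereal n < L2" and L2_pos: "0 < L2" and L2m: "L2 \<le> ereal m"
    and B: "0 \<le> n \<or> (n < 0 \<and> Bpar m n L2 \<le> 0)"
  shows "dca_certificate m n (inv_ext (L1 - ereal m)) (inv_ext (L2 - ereal n)) 0
    ((real_of_ereal L2 + m) / (real_of_ereal L2)\<^sup>2)"
proof -
  obtain b where L2b: "L2 = ereal b"
    using L2_pos L2m by (cases L2) auto
  have b: "0 < b" "b \<le> m" "n < b"
    using L2_pos L2m n2 by (simp_all add: L2b)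
  have "0 \<le> m * b + n * b + m * n"
    using B
  proof
    assume n: "n < 0 \<and> Bpar m n L2 \<le> 0"
    have "Bpar m n L2 * (m * n * b) = m * b + n * b + m * n"
      using Bpar_ereal_mult[of m n b] n b by (simp add: L2b)
    moreover have "m * n * b < 0"
      using n b by (simp add: mult_pos_neg mult_neg_pos)
    ultimately show ?thesis
      using n by (metis mult_nonpos_nonpos order_less_imp_le)
  qed (use b in simp)
  then have "interpolation_certificate n (1 / (b - n)) ((b + m) / b\<^sup>2) (- m)"
    using b by (intro interpolation_certificate_sigma5) (auto simp: power2_eq_square algebra_simps)
  moreover have "interpolation_certificate m (inv_ext (L1 - ereal m)) 0 m"
    using inv_ext_minus_nonneg[OF m1] by (rule interpolation_certificate_zero)
  ultimately show ?thesis
    unfolding dca_certificate_def by (force simp: L2b)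
qed

lemma dca_certificate_D6:
  fixes m n :: real and L1 L2 :: ereal
  assumes "ereal m < L1" and "ereal n < L2" and "L1 \<le> ereal n" and "0 \<le> m"
  shows "dca_certificate m n (inv_ext (L1 - ereal m)) (inv_ext (L2 - ereal n))
    ((real_of_ereal L1 + n) / (real_of_ereal L1)\<^sup>2) 0"
proof (rule dca_certificate_swap, rule dca_certificate_D5)
  show "0 < L1"
    using assms by (cases L1) auto
qed (use assms in auto)

theorem theorem2:
  fixes f1 f2 :: "'a::euclidean_space \<Rightarrow> real"
    and \<mu>1 \<mu>2 :: real and L1 L2 :: ereal
    and x xp g1 g2 g2p :: 'a
  assumes f1: "FmuL \<mu>1 L1 f1" and f2: "FmuL \<mu>2 L2 f2"
    and mu1_nonneg: "\<mu>1 \<ge> 0"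
    and bdd: "bdd_below (range (\<lambda>w. f1 w - f2 w))"
    and dom_ne: "dom_subdiff \<mu>1 f1 \<noteq> {}"
    and dom_sub: "dom_subdiff \<mu>1 f1 \<subseteq> dom_subdiff \<mu>2 f2"
    and range_sub: "range_subdiff \<mu>2 f2 \<subseteq> range_subdiff \<mu>1 f1"
    and smooth: "L1 < \<infinity> \<or> L2 < \<infinity>"
    and mus: "\<mu>1 + \<mu>2 > 0 \<or> (\<mu>1 = 0 \<and> \<mu>2 = 0)"
    and x_dom: "x \<in> dom_subdiff \<mu>1 f1"
    and g2: "g2 \<in> subdiff \<mu>2 f2 x"
    and xp: "\<forall>w. f1 xp - inner g2 xp \<le> f1 w - inner g2 w"
    and g1: "g1 \<in> subdiff \<mu>1 f1 x"
    and g2p: "g2p \<in> subdiff \<mu>2 f2 xp"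
  shows
  "let F = (\<lambda>w. f1 w - f2 w); l1 = inv_ext L1; l2 = inv_ext L2;
       B = Bpar \<mu>1 \<mu>2 L2; E = Epar \<mu>1 \<mu>2 L1 L2;
       ineq = (\<lambda>\<sigma> \<sigma>p. F x - F xp \<ge> \<sigma> * (1/2) * (norm (g1 - g2))^2
                                     + \<sigma>p * (1/2) * (norm (g2 - g2p))^2)
   in
   ((L1 \<ge> L2 \<and> L2 \<ge> ereal \<mu>1 \<and> \<mu>1 \<ge> 0 \<and> L1 > ereal \<mu>2 \<and>
       (\<mu>2 \<ge> 0 \<or> (\<mu>2 < 0 \<and> E \<le> 0)))
     \<longrightarrow> ineq ((1 - \<mu>1 * l2) * inv_ext (L1 - ereal \<mu>1))
               (l2 * (1 + \<mu>1 * (l2 - l1) / (1 - \<mu>1 * l1)))) \<and>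
   ((L2 \<ge> L1 \<and> L1 \<ge> ereal \<mu>2 \<and> \<mu>2 \<ge> 0 \<and> L2 > ereal \<mu>1 \<and> \<mu>1 \<ge> 0)
     \<longrightarrow> ineq (l1 * (1 + \<mu>2 * (l1 - l2) / (1 - \<mu>2 * l2)))
               ((1 - \<mu>2 * l1) * inv_ext (L2 - ereal \<mu>2))) \<and>
   ((\<mu>2 < 0 \<and> \<mu>1 > 0 \<and> L2 > ereal \<mu>1 \<and> L1 > ereal \<mu>2 \<and> B \<le> 0 \<and>
       ((L1 \<ge> L2 \<and> E \<ge> 0) \<or> L2 > L1))
     \<longrightarrow> ineq (l1 * B / (B - l1)) (inv_ext (L2 + ereal \<mu>2))) \<and>
   ((\<mu>2 < 0 \<and> \<mu>1 > 0 \<and> L1 > ereal \<mu>2 \<and>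
       ((B > 0 \<and> L2 > ereal \<mu>1) \<or> (B > 0 \<and> 0 < L2 \<and> L2 \<le> ereal \<mu>1) \<or>
        ((B \<le> 0 \<or> L2 = 0) \<and> L2 \<le> 0)))
     \<longrightarrow> ineq 0 ((\<mu>1 + \<mu>2) / \<mu>2^2)) \<and>
   ((L1 > ereal \<mu>1 \<and> ereal \<mu>1 \<ge> L2 \<and> L2 > 0 \<and> L1 > ereal \<mu>2 \<and>
       (\<mu>2 \<ge> 0 \<or> (\<mu>2 < 0 \<and> B \<le> 0)))
     \<longrightarrow> ineq 0 ((real_of_ereal L2 + \<mu>1) / (real_of_ereal L2)^2)) \<and>
   ((L2 > ereal \<mu>2 \<and> ereal \<mu>2 \<ge> L1 \<and> L1 > ereal \<mu>1 \<and> \<mu>1 \<ge> 0)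
     \<longrightarrow> ineq ((real_of_ereal L1 + \<mu>2) / (real_of_ereal L1)^2) 0)"
proof -
  have m1: "ereal \<mu>1 < L1" and n2: "ereal \<mu>2 < L2"
    using f1 f2 by (simp_all add: FmuL_def)
  have g2_xp: "g2 \<in> subdiff \<mu>1 f1 xp"
    using f1 xp by (intro subdiff_of_argmin) (auto simp: FmuL_def)
  have bound: "\<sigma> * (1/2) * (norm (g1 - g2))\<^sup>2 + \<sigma>' * (1/2) * (norm (g2 - g2p))\<^sup>2
      \<le> f1 x - f2 x - (f1 xp - f2 xp)"
    if "dca_certificate \<mu>1 \<mu>2 (inv_ext (L1 - ereal \<mu>1)) (inv_ext (L2 - ereal \<mu>2)) \<sigma> \<sigma>'"
    for \<sigma> \<sigma>'
    by (rule dca_step_bound[OF f1 f2 g1 g2_xp g2 g2p that])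
  show ?thesis
    unfolding Let_def
    apply (intro conjI impI; rule bound)
    subgoal by (rule dca_certificate_D1) (use m1 n2 smooth mus in auto)
    subgoal by (rule dca_certificate_D2) (use m1 n2 smooth mus in auto)
    subgoal by (rule dca_certificate_D3) (use m1 n2 in auto)
    subgoal by (rule dca_certificate_D4) (use m1 n2 mus in auto)
    subgoal by (rule dca_certificate_D5) (use m1 n2 in auto)
    subgoal by (rule dca_certificate_D6) (use m1 n2 in auto)
    done
qed

end
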